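(* Let $1\le q\le\infty$ and let $q^\ast$ be the conjugate exponent ($1/q+1/q^\ast=1$), with the convention $4/q^\ast=0$ when $q=1$. For $w$ in the unit disc let $k_w(z)=\frac{1}{1-\overline{w}z}$. Then, for $p\ge 0$, the inequality $\|k_w\|_p\le\|\psi\|_q$ holds for all $\psi\in L^q(\mathbb{T})$ with $P_+\psi=k_w$ and for all $w$ in the unit disc if and only if $p\le 4/q^\ast$. Moreover, if $\psi$ has minimal $L^q(\mathbb{T})$ norm among all functions with $P_+\psi=k_w$, then $\|\psi\|_q=\|k_w\|_{4/q^\ast}$ holds for all $w$ in the unit disc when $q=1$ or $q=2$, and only for $w=0$ otherwise.
   Context: $\mathbb{T}$ is the unit circle with normalized measure, $\|\cdot\|_p$ the $L^p(\mathbb{T})$ (quasi-)norm for $p>0$, and for a nontrivial function $\varphi$ in a Hardy space $H^p$ ($p>0$), $\|\varphi\|_0:=\exp\left(\int_0^{2\pi}\log|\varphi(e^{i\theta})|\frac{d\theta}{2\pi}\right)$. The Riesz projection is $P_+\psi=\sum_{n\ge0}\widehat\psi(n)e^{in\theta}$. *)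

theory Defs
  imports "HOL-Analysis.Analysis" "HOL-Probability.Essential_Supremum"
begin

text \<open>Functions on the unit circle are represented as functions of the angle
  theta in [0, 2 pi]; the normalized measure is d theta / (2 pi).\<close>

definition circle_measure :: "real measure" where
  "circle_measure = restrict_space lborel {0..2*pi}"

definition kw :: "complex \<Rightarrow> real \<Rightarrow> complex" where
  "kw w \<theta> = 1 / (1 - cnj w * exp (\<i> * complex_of_real \<theta>))"

definition in_Lq :: "ereal \<Rightarrow> (real \<Rightarrow> complex) \<Rightarrow> bool" where
  "in_Lq q f \<longleftrightarrow> f \<in> borel_measurable circle_measure \<and>
     (if q = \<infinity> then esssup circle_measure (\<lambda>\<theta>. ereal (cmod (f \<theta>))) < \<infinity>
      else set_integrable lborel {0..2*pi} (\<lambda>\<theta>. cmod (f \<theta>) powr real_of_ereal q))"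

definition Lp_norm :: "real \<Rightarrow> (real \<Rightarrow> complex) \<Rightarrow> real" where
  "Lp_norm p f = (if p = 0
      then exp ((LINT \<theta>:{0..2*pi}|lborel. ln (cmod (f \<theta>))) / (2*pi))
      else ((LINT \<theta>:{0..2*pi}|lborel. cmod (f \<theta>) powr p) / (2*pi)) powr (1/p))"

definition Lq_norm :: "ereal \<Rightarrow> (real \<Rightarrow> complex) \<Rightarrow> real" where
  "Lq_norm q f = (if q = \<infinity>
      then real_of_ereal (esssup circle_measure (\<lambda>\<theta>. ereal (cmod (f \<theta>))))
      else Lp_norm (real_of_ereal q) f)"

definition fourier_coeff :: "(real \<Rightarrow> complex) \<Rightarrow> int \<Rightarrow> complex" where
  "fourier_coeff f n =
     (LINT \<theta>:{0..2*pi}|lborel. f \<theta> * exp (- \<i> * of_int n * complex_of_real \<theta>)) / (2*pi)"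

text \<open>P_+ psi = g, understood at the level of Fourier coefficients:
  g has the coefficients of psi for n >= 0 and vanishing coefficients for n < 0.\<close>
definition riesz_proj_eq :: "(real \<Rightarrow> complex) \<Rightarrow> (real \<Rightarrow> complex) \<Rightarrow> bool" where
  "riesz_proj_eq \<psi> g \<longleftrightarrow>
     (\<forall>n::int. n \<ge> 0 \<longrightarrow> fourier_coeff \<psi> n = fourier_coeff g n) \<and>
     (\<forall>n::int. n < 0 \<longrightarrow> fourier_coeff g n = 0)"

text \<open>4/q* = 4(1 - 1/q), with 4/q* = 0 for q = 1 and 4/q* = 4 for q = infinity.\<close>
definition four_over_conj :: "ereal \<Rightarrow> real" where
  "four_over_conj q = (if q = \<infinity> then 4 else 4 * (1 - 1 / real_of_ereal q))"

definition minimal_preimage :: "ereal \<Rightarrow> complex \<Rightarrow> (real \<Rightarrow> complex) \<Rightarrow> bool" where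
  "minimal_preimage q w \<psi> \<longleftrightarrow> in_Lq q \<psi> \<and> riesz_proj_eq \<psi> (kw w) \<and>
     (\<forall>\<phi>. in_Lq q \<phi> \<and> riesz_proj_eq \<phi> (kw w) \<longrightarrow> Lq_norm q \<psi> \<le> Lq_norm q \<phi>)"

end

theory Submission
  imports Defs
begin

(* Write x = 1 - |w|^2, q' for the conjugate exponent of q, and k_w^a for the powers of k_w,
   whose Fourier coefficients are the binomial coefficients c_n(a) = binom(-a, n) (-conj w)^n.
   Pairing any preimage psi of k_w with k_w^a reproduces the value x^(-a) of the Taylor series
   of k_w^a at w, so Hoelder's inequality with a = 2/q' gives ||psi||_q >= x^(-1/q'); equality
   holds for the explicit preimage x^b k_w conj (k_w^b) with b = 2/q - 1.  By Parseval,
   ||k_w||_p^p = sum |c_n(p/2)|^2, which lies between 1 + (p/2)^2 |w|^2 and x^(-p^2/4),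
   strictly below the latter unless p in {0, 2} or w = 0.  Comparing x^(-p/4) with the minimal
   norm x^(-1/q') for small |w| gives the sharp range p <= 4/q' and the equality cases. *)

section \<open>Integration on the circle\<close>

lemma space_circle_measure [simp]: "space circle_measure = {0..2*pi}"
  by (simp add: circle_measure_def space_restrict_space)

lemma set_integral_eq_circle_integral:
  fixes f :: "real \<Rightarrow> 'b::{banach, second_countable_topology}"
  shows "(LINT \<theta>:{0..2*pi}|lborel. f \<theta>) = integral\<^sup>L circle_measure f"
  by (simp add: circle_measure_def integral_restrict_space set_lebesgue_integral_def)

lemma set_integrable_iff_circle_integrable:
  fixes f :: "real \<Rightarrow> 'b::{banach, second_countable_topology}"
  shows "set_integrable lborel {0..2*pi} f \<longleftrightarrow> integrable circle_measure f"
  by (simp add: circle_measure_def integrable_restrict_space set_integrable_def)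

lemma emeasure_circle_measure: "emeasure circle_measure {0..2*pi} = ennreal (2*pi)"
  unfolding circle_measure_def by (subst emeasure_restrict_space) auto

interpretation circle: finite_measure circle_measure
  by (rule finite_measureI) (simp add: emeasure_circle_measure)

lemma measure_circle_measure: "measure circle_measure {0..2*pi} = 2*pi"
  using emeasure_circle_measure by (simp add: measure_def)

lemma continuous_on_imp_circle_measurable:
  "continuous_on {0..2*pi} f \<Longrightarrow> f \<in> borel_measurable circle_measure"
  unfolding circle_measure_def
  using borel_measurable_continuous_on_restrict[of "{0..2*pi}" f]
  by (simp add: measurable_def sets_restrict_space)

lemma continuous_on_imp_circle_integrable:
  fixes f :: "real \<Rightarrow> 'b::{banach, second_countable_topology}"
  shows "continuous_on {0..2*pi} f \<Longrightarrow> integrable circle_measure f"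
  by (simp add: set_integrable_iff_circle_integrable[symmetric] set_integrable_def
      borel_integrable_compact)

definition fourier_basis :: "int \<Rightarrow> real \<Rightarrow> complex" where
  "fourier_basis n \<theta> = exp (\<i> * of_int n * of_real \<theta>)"

lemma fourier_basis_mult: "fourier_basis m \<theta> * fourier_basis n \<theta> = fourier_basis (m + n) \<theta>"
  by (simp add: fourier_basis_def exp_add[symmetric] algebra_simps)

lemma cnj_fourier_basis: "cnj (fourier_basis n \<theta>) = fourier_basis (-n) \<theta>"
  by (simp add: fourier_basis_def exp_cnj)

lemma norm_fourier_basis [simp]: "norm (fourier_basis n \<theta>) = 1"
  by (simp add: fourier_basis_def)

lemma fourier_basis_0 [simp]: "fourier_basis 0 \<theta> = 1"
  by (simp add: fourier_basis_def)

lemma continuous_on_fourier_basis [continuous_intros]: "continuous_on A (fourier_basis n)"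
  unfolding fourier_basis_def by (intro continuous_intros)

lemma integral_fourier_basis:
  "integral\<^sup>L circle_measure (fourier_basis n) = (if n = 0 then 2*pi else 0)"
proof (cases "n = 0")
  case True
  have "fourier_basis 0 = (\<lambda>_. 1)"
    by (rule ext) simp
  with True show ?thesis
    by (simp add: measure_circle_measure scaleR_conv_of_real)
next
  case False
  let ?F = "\<lambda>\<theta>. exp (\<i> * of_int n * of_real \<theta>) / (\<i> * of_int n)"
  have "(LBINT \<theta>=ereal 0..ereal (2*pi). fourier_basis n \<theta>) = ?F (2*pi) - ?F 0"
  proof (rule interval_integral_FTC_finite)
    show "continuous_on {min 0 (2*pi)..max 0 (2*pi)} (fourier_basis n)"
      by (intro continuous_intros)
    fix \<theta> :: real
    have "(?F has_vector_derivative exp (\<i> * of_int n * of_real \<theta>) * (\<i> * of_int n) / (\<i> * of_int n))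
          (at \<theta> within {min 0 (2*pi)..max 0 (2*pi)})"
      by (auto intro!: derivative_eq_intros has_vector_derivative_real_field)
    then show "(?F has_vector_derivative fourier_basis n \<theta>) (at \<theta> within {min 0 (2*pi)..max 0 (2*pi)})"
      using False by (simp add: fourier_basis_def)
  qed
  also have "exp (\<i> * of_int n * of_real (2*pi)) = exp ((2 * of_int n * of_real pi) * \<i>)"
    by (simp add: algebra_simps)
  also have "\<dots> = 1"
    using exp_integer_2pi[of "of_int n"] by (simp add: Ints_of_int)
  finally show ?thesis
    using False by (simp add: interval_integral_Icc set_integral_eq_circle_integral)
qed

lemma fourier_coeff_eq_integral:
  "fourier_coeff f n = integral\<^sup>L circle_measure (\<lambda>\<theta>. fourier_basis (-n) \<theta> * f \<theta>) / (2*pi)"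
  unfolding fourier_coeff_def set_integral_eq_circle_integral fourier_basis_def
  by (simp add: mult_ac)

lemma fourier_coeff_mult_fourier_basis:
  "fourier_coeff (\<lambda>\<theta>. fourier_basis (-n) \<theta> * f \<theta>) m = fourier_coeff f (m + n)"
  unfolding fourier_coeff_eq_integral by (simp add: mult.assoc[symmetric] fourier_basis_mult)

lemma sums_integral_mult_series:
  fixes c :: "nat \<Rightarrow> complex" and b :: "nat \<Rightarrow> 'a \<Rightarrow> complex"
  assumes c: "summable (\<lambda>n. norm (c n))"
    and b: "\<And>n. b n \<in> borel_measurable M" "\<And>n x. norm (b n x) \<le> 1"
    and \<phi>: "integrable M \<phi>"
  shows "(\<lambda>n. c n * (\<integral>x. b n x * \<phi> x \<partial>M)) sums (\<integral>x. (\<Sum>n. c n * b n x) * \<phi> x \<partial>M)"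
proof -
  define f where "f n x = c n * b n x * \<phi> x" for n x
  have norm_f: "norm (f n x) \<le> norm (c n) * norm (\<phi> x)" for n x
    unfolding f_def norm_mult
    using mult_right_mono[OF b(2)[of n x], of "norm (c n) * norm (\<phi> x)"]
    by (simp add: algebra_simps)
  have [measurable]: "\<phi> \<in> borel_measurable M"
    using \<phi> by auto
  have f: "integrable M (f n)" for n
  proof (rule Bochner_Integration.integrable_bound)
    show "integrable M (\<lambda>x. norm (c n) * norm (\<phi> x))"
      using \<phi> by auto
    show "f n \<in> borel_measurable M"
      unfolding f_def using b(1)[of n] by measurable
    show "AE x in M. norm (f n x) \<le> norm (norm (c n) * norm (\<phi> x))"
      using norm_f by (simp add: abs_mult)
  qed
  have "AE x in M. summable (\<lambda>n. norm (f n x))"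
    by (intro AE_I2 summable_comparison_test[OF _ summable_mult2[OF c]]) (use norm_f in auto)
  moreover have "summable (\<lambda>n. \<integral>x. norm (f n x) \<partial>M)"
  proof (rule summable_comparison_test[OF _ summable_mult2[OF c, of "\<integral>x. norm (\<phi> x) \<partial>M"]])
    have "(\<integral>x. norm (f n x) \<partial>M) \<le> (\<integral>x. norm (c n) * norm (\<phi> x) \<partial>M)" for n
      using f \<phi> norm_f by (intro integral_mono) auto
    then show "\<exists>N. \<forall>n\<ge>N. norm (\<integral>x. norm (f n x) \<partial>M) \<le> norm (c n) * (\<integral>x. norm (\<phi> x) \<partial>M)"
      by simp
  qed
  ultimately have "(\<lambda>n. integral\<^sup>L M (f n)) sums (\<integral>x. (\<Sum>n. f n x) \<partial>M)"
    by (rule sums_integral[OF f])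
  moreover have "(\<Sum>n. f n x) = (\<Sum>n. c n * b n x) * \<phi> x" for x
  proof -
    have "summable (\<lambda>n. c n * b n x)"
      by (rule summable_norm_cancel, rule summable_comparison_test[OF _ c])
         (use b(2) in \<open>auto simp: norm_mult intro!: mult_right_le_one_le\<close>)
    then show ?thesis
      unfolding f_def by (simp add: suminf_mult2)
  qed
  moreover have "integral\<^sup>L M (f n) = c n * (\<integral>x. b n x * \<phi> x \<partial>M)" for n
    unfolding f_def by (simp add: mult.assoc)
  ultimately show ?thesis
    by simp
qed

section \<open>Powers of the reproducing kernel\<close>

definition kw_denom :: "complex \<Rightarrow> real \<Rightarrow> complex" where
  "kw_denom w \<theta> = 1 - cnj w * exp (\<i> * of_real \<theta>)"

definition kw_pow :: "real \<Rightarrow> complex \<Rightarrow> real \<Rightarrow> complex" where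
  "kw_pow \<alpha> w \<theta> = kw_denom w \<theta> powr (- of_real \<alpha>)"

definition kw_pow_coeff :: "real \<Rightarrow> complex \<Rightarrow> nat \<Rightarrow> complex" where
  "kw_pow_coeff \<alpha> w n = ((- of_real \<alpha>) gchoose n) * (- cnj w) ^ n"

lemma norm_kw_denom_ge: "cmod w < 1 \<Longrightarrow> 1 - cmod w \<le> norm (kw_denom w \<theta>)"
  using norm_triangle_ineq2[of 1 "cnj w * exp (\<i> * of_real \<theta>)"]
  by (simp add: kw_denom_def norm_mult)

lemma kw_denom_nonzero: "cmod w < 1 \<Longrightarrow> kw_denom w \<theta> \<noteq> 0"
  using norm_kw_denom_ge[of w \<theta>] by auto

lemma Re_kw_denom_pos: "cmod w < 1 \<Longrightarrow> Re (kw_denom w \<theta>) > 0"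
  using complex_Re_le_cmod[of "cnj w * exp (\<i> * of_real \<theta>)"]
  by (simp add: kw_denom_def norm_mult)

lemma continuous_on_kw_denom [continuous_intros]: "continuous_on A (kw_denom w)"
  unfolding kw_denom_def by (intro continuous_intros)

lemma continuous_on_kw_pow [continuous_intros]: "cmod w < 1 \<Longrightarrow> continuous_on A (kw_pow \<alpha> w)"
  unfolding kw_pow_def
  by (intro continuous_intros) (auto simp: kw_denom_nonzero less_imp_le[OF Re_kw_denom_pos])

lemma norm_kw_pow: "norm (kw_pow \<alpha> w \<theta>) = norm (kw_denom w \<theta>) powr (- \<alpha>)"
  unfolding kw_pow_def by (simp add: norm_powr_real_powr')

lemma kw_pow_1: "cmod w < 1 \<Longrightarrow> kw_pow 1 w = kw w"
  using kw_denom_nonzero[of w]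
  by (auto simp: kw_pow_def kw_def powr_minus kw_denom_def divide_inverse)

lemma kw_pow_0: "cmod w < 1 \<Longrightarrow> kw_pow 0 w \<theta> = 1"
  unfolding kw_pow_def using kw_denom_nonzero[of w \<theta>] by simp

lemma norm_kw_pow_add:
  "norm (kw_pow (\<alpha> + \<beta>) w \<theta>) = norm (kw_pow \<alpha> w \<theta>) * norm (kw_pow \<beta> w \<theta>)"
  by (simp add: norm_kw_pow powr_add[symmetric])

lemma norm_kw_pow_2: "norm (kw_pow 2 w \<theta>) = (norm (kw_pow 1 w \<theta>))\<^sup>2"
  using norm_kw_pow_add[of 1 1 w \<theta>] by (simp add: power2_eq_square)

lemma norm_kw_pow_powr: "norm (kw_pow \<alpha> w \<theta>) powr r = norm (kw_pow (\<alpha> * r) w \<theta>)"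
  by (simp add: norm_kw_pow powr_powr)

lemma continuous_on_kw [continuous_intros]: "cmod w < 1 \<Longrightarrow> continuous_on A (kw w)"
  using continuous_on_kw_pow[of w A 1] by (simp add: kw_pow_1)

lemma norm_kw: "cmod (kw w \<theta>) = 1 / norm (kw_denom w \<theta>)"
  by (simp add: kw_def kw_denom_def norm_divide)

lemma summable_norm_kw_pow_coeff: "cmod w < 1 \<Longrightarrow> summable (\<lambda>n. norm (kw_pow_coeff \<alpha> w n))"
  using summable_in_conv_radius[of "norm (- cnj w)" "\<lambda>n. norm ((- of_real \<alpha> :: complex) gchoose n)"]
  by (simp add: conv_radius_gchoose kw_pow_coeff_def norm_mult norm_power)

lemma kw_pow_sums:
  assumes "cmod w < 1"
  shows "(\<lambda>n. kw_pow_coeff \<alpha> w n * fourier_basis (int n) \<theta>) sums kw_pow \<alpha> w \<theta>"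
proof -
  have "norm (- cnj w * exp (\<i> * of_real \<theta>)) < 1"
    using assms by (simp add: norm_mult)
  from gen_binomial_complex[OF this, of "- of_real \<alpha>"]
  have "(\<lambda>n. ((- of_real \<alpha>) gchoose n) * (- cnj w * exp (\<i> * of_real \<theta>)) ^ n) sums kw_pow \<alpha> w \<theta>"
    by (simp add: kw_pow_def kw_denom_def)
  moreover have "(- cnj w * exp (\<i> * of_real \<theta>)) ^ n = (- cnj w) ^ n * fourier_basis (int n) \<theta>" for n
    unfolding power_mult_distrib fourier_basis_def by (simp add: exp_of_nat_mult[symmetric] mult_ac)
  ultimately show ?thesis
    by (simp add: kw_pow_coeff_def mult_ac)
qed

lemma kw_pow_coeff_sums_at_w:
  assumes "cmod w < 1"
  shows "(\<lambda>n. kw_pow_coeff \<alpha> w n * w ^ n) sums of_real ((1 - (cmod w)\<^sup>2) powr (- \<alpha>))"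
proof -
  have cnj_w_w: "cnj w * w = of_real ((cmod w)\<^sup>2)"
    by (metis complex_norm_square mult.commute of_real_power)
  have "norm (- (cnj w * w)) < 1"
    using assms by (simp add: norm_mult abs_square_less_1 power2_eq_square[symmetric])
  from gen_binomial_complex[OF this, of "- of_real \<alpha>"]
  have "(\<lambda>n. ((- of_real \<alpha>) gchoose n) * (- (cnj w * w)) ^ n) sums (1 - cnj w * w) powr (- of_real \<alpha>)"
    by simp
  moreover have "kw_pow_coeff \<alpha> w n * w ^ n = ((- of_real \<alpha>) gchoose n) * (- (cnj w * w)) ^ n" for n
    unfolding kw_pow_coeff_def mult_minus_left[symmetric] power_mult_distrib by (simp only: mult_ac)
  ultimately have "(\<lambda>n. kw_pow_coeff \<alpha> w n * w ^ n) sums (1 - cnj w * w) powr (- of_real \<alpha>)"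
    by simp
  also have "(1 - cnj w * w) powr (- of_real \<alpha>) = of_real ((1 - (cmod w)\<^sup>2) powr (- \<alpha>))"
    using assms unfolding cnj_w_w
    by (subst powr_of_real[symmetric]) (auto simp: abs_square_le_1 less_imp_le)
  finally show ?thesis .
qed

lemma sums_integral_kw_pow_mult:
  assumes "cmod w < 1" and "integrable circle_measure \<phi>"
  shows "(\<lambda>n. kw_pow_coeff \<alpha> w n * (\<integral>\<theta>. fourier_basis (int n) \<theta> * \<phi> \<theta> \<partial>circle_measure))
           sums (\<integral>\<theta>. kw_pow \<alpha> w \<theta> * \<phi> \<theta> \<partial>circle_measure)"
proof -
  have "(\<lambda>n. kw_pow_coeff \<alpha> w n * (\<integral>\<theta>. fourier_basis (int n) \<theta> * \<phi> \<theta> \<partial>circle_measure))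
          sums (\<integral>\<theta>. (\<Sum>n. kw_pow_coeff \<alpha> w n * fourier_basis (int n) \<theta>) * \<phi> \<theta> \<partial>circle_measure)"
    by (rule sums_integral_mult_series[OF summable_norm_kw_pow_coeff[OF assms(1)] _ _ assms(2)])
       (auto intro: continuous_on_imp_circle_measurable continuous_intros)
  moreover have "(\<Sum>n. kw_pow_coeff \<alpha> w n * fourier_basis (int n) \<theta>) = kw_pow \<alpha> w \<theta>" for \<theta>
    using kw_pow_sums[OF assms(1)] by (rule sums_unique[symmetric])
  ultimately show ?thesis
    by simp
qed

lemma sums_integral_cnj_kw_pow_mult:
  assumes "cmod w < 1" and "integrable circle_measure \<phi>"
  shows "(\<lambda>n. cnj (kw_pow_coeff \<alpha> w n) * (\<integral>\<theta>. fourier_basis (- int n) \<theta> * \<phi> \<theta> \<partial>circle_measure))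
           sums (\<integral>\<theta>. cnj (kw_pow \<alpha> w \<theta>) * \<phi> \<theta> \<partial>circle_measure)"
proof -
  have "(\<lambda>n. cnj (kw_pow_coeff \<alpha> w n) * (\<integral>\<theta>. fourier_basis (- int n) \<theta> * \<phi> \<theta> \<partial>circle_measure))
          sums (\<integral>\<theta>. (\<Sum>n. cnj (kw_pow_coeff \<alpha> w n) * fourier_basis (- int n) \<theta>) * \<phi> \<theta> \<partial>circle_measure)"
    by (rule sums_integral_mult_series[OF _ _ _ assms(2)])
       (use summable_norm_kw_pow_coeff[OF assms(1)] in
         \<open>auto intro: continuous_on_imp_circle_measurable continuous_intros\<close>)
  moreover have "(\<Sum>n. cnj (kw_pow_coeff \<alpha> w n) * fourier_basis (- int n) \<theta>) = cnj (kw_pow \<alpha> w \<theta>)" for \<theta>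
    using iffD2[OF sums_cnj kw_pow_sums[OF assms(1)]]
    by (simp add: cnj_fourier_basis sums_unique[symmetric])
  ultimately show ?thesis
    by simp
qed

lemma fourier_coeff_kw_pow:
  assumes "cmod w < 1"
  shows "fourier_coeff (kw_pow \<alpha> w) n = (if n \<ge> 0 then kw_pow_coeff \<alpha> w (nat n) else 0)"
proof -
  let ?c = "\<lambda>m. if m = nat n then (if n \<ge> 0 then kw_pow_coeff \<alpha> w m * (2*pi) else 0) else 0"
  have "(\<lambda>m. kw_pow_coeff \<alpha> w m * (\<integral>\<theta>. fourier_basis (int m) \<theta> * fourier_basis (-n) \<theta> \<partial>circle_measure))
          sums (\<integral>\<theta>. kw_pow \<alpha> w \<theta> * fourier_basis (-n) \<theta> \<partial>circle_measure)"
    by (rule sums_integral_kw_pow_mult[OF assms])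
       (auto intro!: continuous_on_imp_circle_integrable continuous_intros)
  moreover have "kw_pow_coeff \<alpha> w m * (\<integral>\<theta>. fourier_basis (int m) \<theta> * fourier_basis (-n) \<theta> \<partial>circle_measure)
      = ?c m" for m
    by (auto simp: fourier_basis_mult integral_fourier_basis)
  ultimately have "?c sums (\<integral>\<theta>. kw_pow \<alpha> w \<theta> * fourier_basis (-n) \<theta> \<partial>circle_measure)"
    by simp
  moreover have "?c sums (if n \<ge> 0 then kw_pow_coeff \<alpha> w (nat n) * (2*pi) else 0)"
    using sums_single[of "nat n" "\<lambda>m. if n \<ge> 0 then kw_pow_coeff \<alpha> w m * (2*pi) else 0"]
    by simp
  ultimately show ?thesis
    unfolding fourier_coeff_eq_integral by (auto simp: mult.commute dest: sums_unique2)
qed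

lemma kw_pow_coeff_1: "kw_pow_coeff 1 w n = cnj w ^ n"
proof -
  have "(- 1 :: complex) gchoose n = (-1) ^ n"
    by (simp add: gbinomial_pochhammer pochhammer_fact[symmetric])
  then show ?thesis
    by (simp add: kw_pow_coeff_def power_minus')
qed

lemma fourier_coeff_kw:
  "cmod w < 1 \<Longrightarrow> fourier_coeff (kw w) n = (if n \<ge> 0 then cnj w ^ nat n else 0)"
  using fourier_coeff_kw_pow[of w 1 n] by (simp add: kw_pow_1 kw_pow_coeff_1)

lemma sums_cnj_kw_pow_coeff_fourier_coeff:
  assumes "cmod w < 1" and "integrable circle_measure \<phi>"
  shows "(\<lambda>n. cnj (kw_pow_coeff \<alpha> w n) * fourier_coeff \<phi> (int n))
           sums ((\<integral>\<theta>. cnj (kw_pow \<alpha> w \<theta>) * \<phi> \<theta> \<partial>circle_measure) / (2*pi))"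
  using sums_divide[OF sums_integral_cnj_kw_pow_mult[OF assms, of \<alpha>], of "2*pi"]
  by (simp add: fourier_coeff_eq_integral)

text \<open>Reproducing property: the pairing is the Taylor series of \<open>k_w\<^sup>\<alpha>\<close> evaluated at \<open>w\<close>.\<close>
lemma integral_cnj_kw_pow_mult:
  assumes "cmod w < 1" and "integrable circle_measure \<phi>"
    and "\<And>n. fourier_coeff \<phi> (int n) = z * cnj w ^ n"
  shows "(\<integral>\<theta>. cnj (kw_pow \<alpha> w \<theta>) * \<phi> \<theta> \<partial>circle_measure) / (2*pi)
           = z * of_real ((1 - (cmod w)\<^sup>2) powr (- \<alpha>))"
proof -
  have "(\<lambda>n. z * cnj (kw_pow_coeff \<alpha> w n * w ^ n))
          sums (z * cnj (of_real ((1 - (cmod w)\<^sup>2) powr (- \<alpha>))))"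
    using sums_mult[OF iffD2[OF sums_cnj kw_pow_coeff_sums_at_w[OF assms(1)]], of z] by simp
  then have "(\<lambda>n. cnj (kw_pow_coeff \<alpha> w n) * fourier_coeff \<phi> (int n))
               sums (z * of_real ((1 - (cmod w)\<^sup>2) powr (- \<alpha>)))"
    by (simp add: assms(3) mult_ac)
  with sums_cnj_kw_pow_coeff_fourier_coeff[OF assms(1,2)] show ?thesis
    using sums_unique2 by blast
qed

lemma parseval_kw_pow:
  assumes "cmod w < 1"
  shows "(\<lambda>n. (norm (kw_pow_coeff \<alpha> w n))\<^sup>2)
           sums ((\<integral>\<theta>. (norm (kw_pow \<alpha> w \<theta>))\<^sup>2 \<partial>circle_measure) / (2*pi))"
proof -
  have cnj_mult_self: "cnj z * z = of_real ((norm z)\<^sup>2)" for z :: complex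
    by (metis complex_norm_square mult.commute of_real_power)
  have "integrable circle_measure (kw_pow \<alpha> w)"
    by (intro continuous_on_imp_circle_integrable continuous_intros assms)
  from sums_cnj_kw_pow_coeff_fourier_coeff[OF assms this, of \<alpha>]
  have "(\<lambda>n. cnj (kw_pow_coeff \<alpha> w n) * kw_pow_coeff \<alpha> w n)
          sums ((\<integral>\<theta>. cnj (kw_pow \<alpha> w \<theta>) * kw_pow \<alpha> w \<theta> \<partial>circle_measure) / (2*pi))"
    by (simp add: fourier_coeff_kw_pow[OF assms])
  then have "(\<lambda>n. of_real ((norm (kw_pow_coeff \<alpha> w n))\<^sup>2))
          sums (of_real ((\<integral>\<theta>. (norm (kw_pow \<alpha> w \<theta>))\<^sup>2 \<partial>circle_measure) / (2*pi)) :: complex)"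
    by (simp only: cnj_mult_self integral_complex_of_real of_real_divide of_real_mult of_real_numeral)
  then show ?thesis
    by (simp only: sums_of_real_iff)
qed

lemma summable_norm_kw_pow_coeff_sq:
  "cmod w < 1 \<Longrightarrow> summable (\<lambda>n. (norm (kw_pow_coeff \<alpha> w n))\<^sup>2)"
  using parseval_kw_pow sums_summable by blast

lemma integral_norm_kw_pow_sq:
  "cmod w < 1 \<Longrightarrow> (\<integral>\<theta>. (norm (kw_pow \<alpha> w \<theta>))\<^sup>2 \<partial>circle_measure) = 2*pi * (\<Sum>n. (norm (kw_pow_coeff \<alpha> w n))\<^sup>2)"
  using parseval_kw_pow[of w \<alpha>] by (simp add: sums_unique[symmetric])

section \<open>Estimates for the binomial coefficients\<close>

lemma pochhammer_nonneg':
  fixes x :: "'a :: linordered_semidom"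
  shows "0 \<le> x \<Longrightarrow> 0 \<le> pochhammer x n"
  by (induction n) (auto simp: pochhammer_Suc)

lemma pochhammer_mono:
  fixes a b :: "'a :: linordered_semidom"
  shows "0 \<le> a \<Longrightarrow> a \<le> b \<Longrightarrow> pochhammer a n \<le> pochhammer b n"
  by (induction n) (auto simp: pochhammer_Suc pochhammer_nonneg' intro!: mult_mono add_mono)

lemma pochhammer_square_le:
  fixes a :: real
  assumes "0 \<le> a"
  shows "(pochhammer a n)\<^sup>2 \<le> pochhammer (a\<^sup>2) n * fact n"
proof (induction n)
  case 0
  then show ?case by simp
next
  case (Suc n)
  have "0 \<le> real n * (a - 1)\<^sup>2"
    by simp
  then have step: "(a + real n)\<^sup>2 \<le> (a\<^sup>2 + real n) * (real n + 1)"
    by (simp add: power2_eq_square algebra_simps)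
  have "(pochhammer a (Suc n))\<^sup>2 = (pochhammer a n)\<^sup>2 * (a + real n)\<^sup>2"
    by (simp add: pochhammer_Suc power_mult_distrib)
  also have "\<dots> \<le> (pochhammer (a\<^sup>2) n * fact n) * ((a\<^sup>2 + real n) * (real n + 1))"
    using Suc step pochhammer_nonneg'[of "a\<^sup>2" n] by (intro mult_mono) auto
  also have "\<dots> = pochhammer (a\<^sup>2) (Suc n) * fact (Suc n)"
    by (simp add: pochhammer_Suc algebra_simps)
  finally show ?case .
qed

lemma suminf_less:
  fixes f g :: "nat \<Rightarrow> real"
  assumes "summable f" "summable g" "\<And>n. f n \<le> g n" "f i < g i"
  shows "suminf f < suminf g"
  using suminf_pos2[of "\<lambda>n. g n - f n" i] summable_diff[OF assms(2,1)] suminf_diff[OF assms(2,1)] assms(3,4)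
  by simp

lemma binomial_series_pochhammer:
  fixes x b :: real
  assumes "\<bar>x\<bar> < 1"
  shows "(\<lambda>n. pochhammer b n / fact n * x ^ n) sums ((1 - x) powr (- b))"
proof -
  have "((-b) gchoose n) * (-x) ^ n = pochhammer b n / fact n * x ^ n" for n
  proof -
    have "((-1::real) ^ n) * (-1) ^ n = 1"
      by (simp add: power_mult_distrib[symmetric])
    then show ?thesis
      unfolding gbinomial_pochhammer power_minus[of x] by (simp add: field_simps)
  qed
  with gen_binomial_real[of "-x" "-b"] assms show ?thesis
    by simp
qed

lemma norm_kw_pow_coeff:
  assumes "0 \<le> \<alpha>"
  shows "norm (kw_pow_coeff \<alpha> w n) = pochhammer \<alpha> n / fact n * cmod w ^ n"
proof -
  have "(- of_real \<alpha> :: complex) gchoose n = (-1) ^ n * of_real (pochhammer \<alpha> n / fact n)"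
    by (simp add: gbinomial_pochhammer pochhammer_of_real)
  then show ?thesis
    using pochhammer_nonneg'[OF assms, of n]
    by (simp add: kw_pow_coeff_def norm_mult norm_power norm_divide)
qed

lemma norm_kw_pow_coeff_sq:
  assumes "0 \<le> \<alpha>"
  shows "(norm (kw_pow_coeff \<alpha> w n))\<^sup>2 = (pochhammer \<alpha> n / fact n)\<^sup>2 * ((cmod w)\<^sup>2) ^ n"
proof -
  have "((cmod w)\<^sup>2) ^ n = (cmod w ^ n)\<^sup>2"
    by (simp add: power_mult[symmetric] mult.commute)
  then show ?thesis
    by (simp add: norm_kw_pow_coeff[OF assms] power_mult_distrib power_divide)
qed

lemma norm_kw_pow_coeff_sq_le:
  assumes "0 \<le> \<alpha>"
  shows "(norm (kw_pow_coeff \<alpha> w n))\<^sup>2 \<le> pochhammer (\<alpha>\<^sup>2) n / fact n * ((cmod w)\<^sup>2) ^ n"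
proof -
  have "(pochhammer \<alpha> n / fact n)\<^sup>2 = (pochhammer \<alpha> n)\<^sup>2 / fact n / fact n"
    by (simp add: power2_eq_square)
  also have "\<dots> \<le> pochhammer (\<alpha>\<^sup>2) n * fact n / fact n / fact n"
    using pochhammer_square_le[OF assms, of n] by (intro divide_right_mono) auto
  finally show ?thesis
    unfolding norm_kw_pow_coeff_sq[OF assms] by (intro mult_right_mono) auto
qed

lemma sum_norm_kw_pow_coeff_sq_le:
  assumes "cmod w < 1" and "0 \<le> \<alpha>" and "\<alpha>\<^sup>2 \<le> b"
  shows "(\<Sum>n. (norm (kw_pow_coeff \<alpha> w n))\<^sup>2) \<le> (1 - (cmod w)\<^sup>2) powr (- b)"
proof -
  have binomial: "(\<lambda>n. pochhammer b n / fact n * ((cmod w)\<^sup>2) ^ n) sums (1 - (cmod w)\<^sup>2) powr (- b)"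
    using assms(1) by (intro binomial_series_pochhammer) (simp add: abs_square_less_1)
  have "(norm (kw_pow_coeff \<alpha> w n))\<^sup>2 \<le> pochhammer b n / fact n * ((cmod w)\<^sup>2) ^ n" for n
  proof -
    have "pochhammer (\<alpha>\<^sup>2) n / fact n * ((cmod w)\<^sup>2) ^ n \<le> pochhammer b n / fact n * ((cmod w)\<^sup>2) ^ n"
      using pochhammer_mono[of "\<alpha>\<^sup>2" b n] assms(3) by (intro mult_right_mono divide_right_mono) auto
    with norm_kw_pow_coeff_sq_le[OF assms(2)] show ?thesis
      by (rule order_trans)
  qed
  then have "(\<Sum>n. (norm (kw_pow_coeff \<alpha> w n))\<^sup>2) \<le> (\<Sum>n. pochhammer b n / fact n * ((cmod w)\<^sup>2) ^ n)"
    using summable_norm_kw_pow_coeff_sq[OF assms(1)] sums_summable[OF binomial]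
    by (rule suminf_le)
  also have "\<dots> = (1 - (cmod w)\<^sup>2) powr (- b)"
    using binomial by (rule sums_unique[symmetric])
  finally show ?thesis .
qed

lemma sum_norm_kw_pow_coeff_sq_less:
  assumes "cmod w < 1" "w \<noteq> 0" and "0 < \<alpha>" "\<alpha> \<noteq> 1"
  shows "(\<Sum>n. (norm (kw_pow_coeff \<alpha> w n))\<^sup>2) < (1 - (cmod w)\<^sup>2) powr (- (\<alpha>\<^sup>2))"
proof -
  define x where "x = (cmod w)\<^sup>2"
  have x: "0 < x" "x < 1"
    using assms(1,2) by (auto simp: abs_square_less_1 x_def)
  define f where "f n = (norm (kw_pow_coeff \<alpha> w n))\<^sup>2" for n
  define g where "g n = pochhammer (\<alpha>\<^sup>2) n / fact n * x ^ n" for n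
  have binomial: "g sums (1 - x) powr (- (\<alpha>\<^sup>2))"
    unfolding g_def using x by (intro binomial_series_pochhammer) simp
  have "f n \<le> g n" for n
    unfolding f_def g_def x_def using assms(3) by (intro norm_kw_pow_coeff_sq_le) simp
  moreover have "f 2 < g 2"
  proof -
    have "\<alpha>\<^sup>2 * (\<alpha>\<^sup>2 + 1) * 2 - (\<alpha> * (\<alpha> + 1))\<^sup>2 = \<alpha>\<^sup>2 * (\<alpha> - 1)\<^sup>2"
      by (simp add: power2_eq_square algebra_simps)
    moreover have "\<alpha>\<^sup>2 * (\<alpha> - 1)\<^sup>2 > 0"
      using assms(3,4) by simp
    ultimately have "(\<alpha> * (\<alpha> + 1))\<^sup>2 < \<alpha>\<^sup>2 * (\<alpha>\<^sup>2 + 1) * 2"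
      by linarith
    then have "(\<alpha> * (\<alpha> + 1) / 2)\<^sup>2 * x\<^sup>2 < \<alpha>\<^sup>2 * (\<alpha>\<^sup>2 + 1) / 2 * x\<^sup>2"
      using x by (intro mult_strict_right_mono) (auto simp: power2_eq_square field_simps)
    then show ?thesis
      unfolding f_def g_def norm_kw_pow_coeff_sq[OF less_imp_le[OF assms(3)]] x_def[symmetric]
      by (simp add: pochhammer_Suc numeral_2_eq_2 fact_Suc)
  qed
  moreover have "summable f"
    unfolding f_def by (rule summable_norm_kw_pow_coeff_sq[OF assms(1)])
  ultimately have "(\<Sum>n. f n) < (\<Sum>n. g n)"
    using sums_summable[OF binomial] by (intro suminf_less) auto
  also have "(\<Sum>n. g n) = (1 - x) powr (- (\<alpha>\<^sup>2))"
    using binomial by (rule sums_unique[symmetric])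
  finally show ?thesis
    unfolding f_def x_def .
qed

lemma sum_norm_kw_pow_coeff_sq_ge:
  assumes "cmod w < 1" and "0 \<le> \<alpha>"
  shows "1 + \<alpha>\<^sup>2 * (cmod w)\<^sup>2 \<le> (\<Sum>n. (norm (kw_pow_coeff \<alpha> w n))\<^sup>2)"
proof -
  have "(\<Sum>n<2. (norm (kw_pow_coeff \<alpha> w n))\<^sup>2) \<le> (\<Sum>n. (norm (kw_pow_coeff \<alpha> w n))\<^sup>2)"
    by (rule sum_le_suminf[OF summable_norm_kw_pow_coeff_sq[OF assms(1)]]) auto
  moreover have "{..<2::nat} = {0, 1}"
    by auto
  ultimately show ?thesis
    by (simp add: norm_kw_pow_coeff_sq[OF assms(2)])
qed

lemma sum_norm_kw_pow_coeff_1_sq: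
  assumes "cmod w < 1"
  shows "(\<Sum>n. (norm (kw_pow_coeff 1 w n))\<^sup>2) = 1 / (1 - (cmod w)\<^sup>2)"
proof -
  have "(\<lambda>n. ((cmod w)\<^sup>2) ^ n) sums (1 / (1 - (cmod w)\<^sup>2))"
    using assms by (intro geometric_sums) (simp add: abs_square_less_1)
  then show ?thesis
    by (simp add: kw_pow_coeff_1 norm_power power_mult[symmetric] mult.commute[of 2] sums_unique[symmetric])
qed

lemma integral_norm_kw_sq:
  "cmod w < 1 \<Longrightarrow> (\<integral>\<theta>. (norm (kw_pow 1 w \<theta>))\<^sup>2 \<partial>circle_measure) = 2*pi / (1 - (cmod w)\<^sup>2)"
  by (simp add: integral_norm_kw_pow_sq sum_norm_kw_pow_coeff_1_sq)

section \<open>Norms of the reproducing kernel\<close>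

lemma norm_kw_powr:
  assumes "cmod w < 1"
  shows "cmod (kw w \<theta>) powr p = (norm (kw_pow (p/2) w \<theta>))\<^sup>2"
proof -
  have "(norm (kw_pow (p/2) w \<theta>))\<^sup>2 = norm (kw_denom w \<theta>) powr (- (p/2) + - (p/2))"
    by (simp only: norm_kw_pow power2_eq_square powr_add)
  also have "\<dots> = cmod (kw w \<theta>) powr p"
    using kw_denom_nonzero[OF assms, of \<theta>] by (simp add: norm_kw powr_minus_divide powr_divide)
  finally show ?thesis ..
qed

lemma Lp_norm_kw:
  assumes "cmod w < 1" and "p \<noteq> 0"
  shows "Lp_norm p (kw w) = (\<Sum>n. (norm (kw_pow_coeff (p/2) w n))\<^sup>2) powr (1/p)"
  using assms
  by (simp add: Lp_norm_def set_integral_eq_circle_integral norm_kw_powr integral_norm_kw_pow_sq)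

lemma Lp_norm_2_kw:
  assumes "cmod w < 1"
  shows "Lp_norm 2 (kw w) = (1 - (cmod w)\<^sup>2) powr (- (1/2))"
  using assms abs_square_less_1[of "cmod w"]
  by (simp add: Lp_norm_kw sum_norm_kw_pow_coeff_1_sq powr_divide powr_minus_divide)

lemma Ln_kw_denom_sums:
  assumes "cmod w < 1"
  shows "(\<lambda>n. - (cnj w ^ n) / of_nat n * fourier_basis (int n) \<theta>) sums Ln (kw_denom w \<theta>)"
proof -
  have "cmod (- cnj w * exp (\<i> * of_real \<theta>)) < 1"
    using assms by (simp add: norm_mult)
  from Ln_series'[OF this]
  have "(\<lambda>n. - ((cnj w * exp (\<i> * of_real \<theta>)) ^ n) / of_nat n) sums Ln (kw_denom w \<theta>)"
    by (simp add: kw_denom_def)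
  moreover have "(cnj w * exp (\<i> * of_real \<theta>)) ^ n = cnj w ^ n * fourier_basis (int n) \<theta>" for n
    unfolding power_mult_distrib fourier_basis_def by (simp add: exp_of_nat_mult[symmetric] mult_ac)
  ultimately show ?thesis
    by simp
qed

text \<open>The mean value property of the harmonic function \<open>log \<bar>1 - cnj w z\<bar>\<close>. The constant
  term of the series above is \<open>-1/0 = 0\<close>, and all other terms integrate to zero.\<close>
lemma integral_ln_norm_kw_denom:
  assumes "cmod w < 1"
  shows "(\<integral>\<theta>. ln (norm (kw_denom w \<theta>)) \<partial>circle_measure) = 0"
proof -
  define d where "d n = - (cnj w ^ n) / of_nat n" for n
  have "summable (\<lambda>n. norm (d n))"
  proof (rule summable_comparison_test)
    have "norm (d n) \<le> cmod w ^ n" for n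
      using mult_left_mono[of 1 "real n" "cmod w ^ n"]
      by (cases "n = 0") (auto simp: d_def norm_divide norm_power divide_le_eq)
    then show "\<exists>N. \<forall>n\<ge>N. norm (norm (d n)) \<le> cmod w ^ n"
      by auto
    show "summable (\<lambda>n. cmod w ^ n)"
      using assms by (simp add: summable_geometric)
  qed
  then have "(\<lambda>n. d n * (\<integral>\<theta>. fourier_basis (int n) \<theta> * 1 \<partial>circle_measure))
               sums (\<integral>\<theta>. (\<Sum>n. d n * fourier_basis (int n) \<theta>) * 1 \<partial>circle_measure)"
    by (rule sums_integral_mult_series)
       (auto intro: continuous_on_imp_circle_measurable continuous_intros)
  moreover have "(\<lambda>n. d n * (\<integral>\<theta>. fourier_basis (int n) \<theta> * 1 \<partial>circle_measure)) = (\<lambda>n. 0)"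
    by (rule ext) (auto simp: d_def integral_fourier_basis)
  moreover have "(\<Sum>n. d n * fourier_basis (int n) \<theta>) = Ln (kw_denom w \<theta>)" for \<theta>
    unfolding d_def using Ln_kw_denom_sums[OF assms] by (rule sums_unique[symmetric])
  ultimately have "(\<integral>\<theta>. Ln (kw_denom w \<theta>) \<partial>circle_measure) = 0"
    using sums_unique2[OF sums_zero] by simp
  moreover have "integrable circle_measure (\<lambda>\<theta>. Ln (kw_denom w \<theta>))"
    using Re_kw_denom_pos[OF assms]
    by (intro continuous_on_imp_circle_integrable continuous_intros)
       (metis Re_complex_of_real linorder_not_less nonpos_Reals_cases)
  ultimately have "(\<integral>\<theta>. Re (Ln (kw_denom w \<theta>)) \<partial>circle_measure) = 0"
    by simp
  moreover have "Re (Ln (kw_denom w \<theta>)) = ln (norm (kw_denom w \<theta>))" for \<theta>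
    using kw_denom_nonzero[OF assms] by simp
  ultimately show ?thesis
    by simp
qed

lemma Lp_norm_0_kw: "cmod w < 1 \<Longrightarrow> Lp_norm 0 (kw w) = 1"
  using kw_denom_nonzero[of w]
  by (simp add: Lp_norm_def set_integral_eq_circle_integral norm_kw ln_div integral_ln_norm_kw_denom)

lemma Lp_norm_kw_le:
  assumes "cmod w < 1" and "0 \<le> p"
  shows "Lp_norm p (kw w) \<le> (1 - (cmod w)\<^sup>2) powr (- (p/4))"
proof (cases "p = 0")
  case True
  then show ?thesis
    using assms(1) abs_square_less_1[of "cmod w"] by (simp add: Lp_norm_0_kw)
next
  case False
  then have "0 < p"
    using assms(2) by simp
  have "(\<Sum>n. (norm (kw_pow_coeff (p/2) w n))\<^sup>2) \<le> (1 - (cmod w)\<^sup>2) powr (- ((p/2)\<^sup>2))"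
    using assms by (intro sum_norm_kw_pow_coeff_sq_le) auto
  then have "Lp_norm p (kw w) \<le> ((1 - (cmod w)\<^sup>2) powr (- ((p/2)\<^sup>2))) powr (1/p)"
    using \<open>0 < p\<close> assms(1) summable_norm_kw_pow_coeff_sq[OF assms(1)]
    by (simp add: Lp_norm_kw suminf_nonneg powr_mono2)
  also have "\<dots> = (1 - (cmod w)\<^sup>2) powr (- (p/4))"
    using \<open>0 < p\<close> by (simp add: powr_powr power2_eq_square)
  finally show ?thesis .
qed

lemma Lp_norm_kw_less:
  assumes "cmod w < 1" "w \<noteq> 0" and "0 < p" "p \<noteq> 2"
  shows "Lp_norm p (kw w) < (1 - (cmod w)\<^sup>2) powr (- (p/4))"
proof -
  have "(\<Sum>n. (norm (kw_pow_coeff (p/2) w n))\<^sup>2) < (1 - (cmod w)\<^sup>2) powr (- ((p/2)\<^sup>2))"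
    using assms by (intro sum_norm_kw_pow_coeff_sq_less) auto
  then have "Lp_norm p (kw w) < ((1 - (cmod w)\<^sup>2) powr (- ((p/2)\<^sup>2))) powr (1/p)"
    using assms summable_norm_kw_pow_coeff_sq[OF assms(1)]
    by (simp add: Lp_norm_kw suminf_nonneg powr_less_mono2)
  also have "\<dots> = (1 - (cmod w)\<^sup>2) powr (- (p/4))"
    using assms(3) by (simp add: powr_powr power2_eq_square)
  finally show ?thesis .
qed

lemma Lp_norm_kw_ge:
  assumes "cmod w < 1" and "0 < p"
  shows "(1 + (p/2)\<^sup>2 * (cmod w)\<^sup>2) powr (1/p) \<le> Lp_norm p (kw w)"
  using sum_norm_kw_pow_coeff_sq_ge[OF assms(1), of "p/2"] assms
  by (simp add: Lp_norm_kw powr_mono2)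

section \<open>Lower bound for the norm of a preimage\<close>

lemma Youngs_inequality_normalized:
  fixes a b A B p q :: real
  assumes "1 < p" "1 < q" "1/p + 1/q = 1" and "0 \<le> a" "0 \<le> b" and "0 < A" "0 < B"
  shows "a * b / (A powr (1/p) * B powr (1/q)) \<le> a powr p / (p * A) + b powr q / (q * B)"
proof -
  have "(a / A powr (1/p)) * (b / B powr (1/q))
          \<le> (a / A powr (1/p)) powr p / p + (b / B powr (1/q)) powr q / q"
    using assms by (intro Youngs_inequality) auto
  also have "(a / A powr (1/p)) powr p = a powr p / A"
    using assms by (simp add: powr_divide powr_powr)
  also have "(b / B powr (1/q)) powr q = b powr q / B"
    using assms by (simp add: powr_divide powr_powr)
  finally show ?thesis
    by (simp add: field_simps)
qed

lemma Holder_inequality: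
  fixes f g :: "'a \<Rightarrow> real"
  assumes pq: "1 < p" "1 < q" "1/p + 1/q = 1"
    and [measurable]: "f \<in> borel_measurable M" "g \<in> borel_measurable M"
    and nonneg: "\<And>x. 0 \<le> f x" "\<And>x. 0 \<le> g x"
    and f: "integrable M (\<lambda>x. f x powr p)" and g: "integrable M (\<lambda>x. g x powr q)"
    and fg: "integrable M (\<lambda>x. f x * g x)"
  shows "(\<integral>x. f x * g x \<partial>M) \<le> (\<integral>x. f x powr p \<partial>M) powr (1/p) * (\<integral>x. g x powr q \<partial>M) powr (1/q)"
proof -
  define A where "A = (\<integral>x. f x powr p \<partial>M)"
  define B where "B = (\<integral>x. g x powr q \<partial>M)"
  have "0 \<le> A" "0 \<le> B"
    by (simp_all add: A_def B_def)
  show ?thesis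
  proof (cases "A = 0 \<or> B = 0")
    case True
    then have "(AE x in M. f x powr p = 0) \<or> (AE x in M. g x powr q = 0)"
      using integral_nonneg_eq_0_iff_AE[OF f] integral_nonneg_eq_0_iff_AE[OF g]
      by (auto simp: A_def B_def)
    then have "AE x in M. f x * g x = 0"
      by (auto elim: AE_mp)
    then show ?thesis
      by (simp add: integral_eq_zero_AE)
  next
    case False
    then have "0 < A" "0 < B"
      using \<open>0 \<le> A\<close> \<open>0 \<le> B\<close> by auto
    define K where "K = A powr (1/p) * B powr (1/q)"
    have "0 < K"
      using \<open>0 < A\<close> \<open>0 < B\<close> by (simp add: K_def)
    have "(\<integral>x. f x * g x \<partial>M) / K = (\<integral>x. f x * g x / K \<partial>M)"
      by simp
    also have "\<dots> \<le> (\<integral>x. f x powr p / (p * A) + g x powr q / (q * B) \<partial>M)"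
      using fg f g pq nonneg \<open>0 < A\<close> \<open>0 < B\<close>
      by (intro integral_mono) (auto simp: K_def intro: Youngs_inequality_normalized)
    also have "\<dots> = 1/p + 1/q"
      using f g \<open>0 < A\<close> \<open>0 < B\<close> by (simp add: A_def B_def)
    finally show ?thesis
      using \<open>0 < K\<close> pq(3) by (simp add: K_def A_def B_def divide_le_eq)
  qed
qed

lemma AE_le_real_esssup:
  fixes f :: "'a \<Rightarrow> real"
  assumes "emeasure M (space M) \<noteq> 0" and "\<And>x. 0 \<le> f x" and "esssup M (\<lambda>x. ereal (f x)) < \<infinity>"
  shows "AE x in M. f x \<le> real_of_ereal (esssup M (\<lambda>x. ereal (f x)))"
proof -
  have "0 \<le> esssup M (\<lambda>x. ereal (f x))"
    using esssup_mono[of "\<lambda>_. 0 :: ereal" M "\<lambda>x. ereal (f x)"] esssup_const[OF assms(1), of "0 :: ereal"] assms(2)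
    by simp
  then have "esssup M (\<lambda>x. ereal (f x)) = ereal (real_of_ereal (esssup M (\<lambda>x. ereal (f x))))"
    using assms(3) by (cases "esssup M (\<lambda>x. ereal (f x))") auto
  with esssup_AE[of "\<lambda>x. ereal (f x)" M] show ?thesis
    by (metis (mono_tags, lifting) AE_mp AE_I2 ereal_less_eq(3))
qed

lemma le_one_plus_powr:
  fixes t q :: real
  assumes "1 \<le> q" and "0 \<le> t"
  shows "t \<le> 1 + t powr q"
proof (cases "1 \<le> t")
  case True
  then have "t powr 1 \<le> t powr q"
    using assms(1) by (intro powr_mono)
  with True show ?thesis
    by simp
next
  case False
  have "0 \<le> t powr q"
    by simp
  with False show ?thesis
    by linarith
qed

lemma in_Lq_integrable:
  assumes "1 \<le> q" and "in_Lq q \<psi>"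
  shows "integrable circle_measure \<psi>"
proof -
  have measurable: "\<psi> \<in> borel_measurable circle_measure"
    using assms(2) by (simp add: in_Lq_def)
  show ?thesis
  proof (cases q)
    case (real q')
    then have "1 \<le> q'"
      using assms(1) by simp
    have "integrable circle_measure (\<lambda>\<theta>. cmod (\<psi> \<theta>) powr q')"
      using assms(2) real by (simp add: in_Lq_def set_integrable_iff_circle_integrable)
    then have "integrable circle_measure (\<lambda>\<theta>. 1 + cmod (\<psi> \<theta>) powr q')"
      by simp
    moreover have "norm (\<psi> \<theta>) \<le> norm (1 + cmod (\<psi> \<theta>) powr q')" for \<theta>
      using le_one_plus_powr[OF \<open>1 \<le> q'\<close>, of "cmod (\<psi> \<theta>)"] by simp
    ultimately show ?thesis
      by (intro Bochner_Integration.integrable_bound[OF _ measurable] AE_I2)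
  next
    case PInf
    then have "AE \<theta> in circle_measure.
        cmod (\<psi> \<theta>) \<le> real_of_ereal (esssup circle_measure (\<lambda>\<theta>. ereal (cmod (\<psi> \<theta>))))"
      using assms(2) by (intro AE_le_real_esssup) (auto simp: in_Lq_def emeasure_circle_measure)
    then show ?thesis
      by (intro circle.integrable_const_bound[OF _ measurable]) auto
  next
    case MInf
    with assms(1) show ?thesis
      by simp
  qed
qed

lemma fourier_coeff_preimage_kw:
  "cmod w < 1 \<Longrightarrow> riesz_proj_eq \<psi> (kw w) \<Longrightarrow> fourier_coeff \<psi> (int n) = cnj w ^ n"
  by (simp add: riesz_proj_eq_def fourier_coeff_kw)

lemma integral_cnj_kw_pow_preimage:
  assumes "cmod w < 1" and "integrable circle_measure \<psi>" and "riesz_proj_eq \<psi> (kw w)"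
  shows "(\<integral>\<theta>. cnj (kw_pow \<alpha> w \<theta>) * \<psi> \<theta> \<partial>circle_measure) = of_real (2*pi * (1 - (cmod w)\<^sup>2) powr (- \<alpha>))"
  using integral_cnj_kw_pow_mult[OF assms(1,2), of 1] fourier_coeff_preimage_kw[OF assms(1,3)]
  by (simp add: field_simps)

lemma integrable_continuous_mult:
  fixes g \<psi> :: "real \<Rightarrow> complex"
  assumes "continuous_on {0..2*pi} g" and "integrable circle_measure \<psi>"
  shows "integrable circle_measure (\<lambda>\<theta>. g \<theta> * \<psi> \<theta>)"
proof -
  obtain B where B: "\<forall>\<theta>\<in>{0..2*pi}. norm (g \<theta>) \<le> B"
    using compact_imp_bounded[OF compact_continuous_image[OF assms(1) compact_Icc]]
    by (auto simp: bounded_iff)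
  show ?thesis
  proof (rule Bochner_Integration.integrable_bound)
    show "integrable circle_measure (\<lambda>\<theta>. B * norm (\<psi> \<theta>))"
      using assms(2) by auto
    show "(\<lambda>\<theta>. g \<theta> * \<psi> \<theta>) \<in> borel_measurable circle_measure"
      using continuous_on_imp_circle_measurable[OF assms(1)] assms(2) by auto
    show "AE \<theta> in circle_measure. norm (g \<theta> * \<psi> \<theta>) \<le> norm (B * norm (\<psi> \<theta>))"
    proof (rule AE_I2)
      fix \<theta>
      assume "\<theta> \<in> space circle_measure"
      then have "norm (g \<theta> * \<psi> \<theta>) \<le> B * norm (\<psi> \<theta>)"
        using B by (simp add: norm_mult mult_right_mono)
      then show "norm (g \<theta> * \<psi> \<theta>) \<le> norm (B * norm (\<psi> \<theta>))"
        by (metis abs_ge_self order_trans real_norm_def)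
    qed
  qed
qed

lemma integrable_norm_kw_pow_mult:
  assumes "cmod w < 1" and "integrable circle_measure \<psi>"
  shows "integrable circle_measure (\<lambda>\<theta>. norm (kw_pow \<alpha> w \<theta>) * cmod (\<psi> \<theta>))"
  using integrable_norm[OF integrable_continuous_mult[of "\<lambda>\<theta>. kw_pow \<alpha> w \<theta>", OF _ assms(2)]]
    continuous_on_kw_pow[OF assms(1)]
  by (simp add: norm_mult)

lemma integral_norm_kw_pow_preimage_ge:
  assumes "cmod w < 1" and "integrable circle_measure \<psi>" and "riesz_proj_eq \<psi> (kw w)"
  shows "2*pi * (1 - (cmod w)\<^sup>2) powr (- \<alpha>) \<le> (\<integral>\<theta>. norm (kw_pow \<alpha> w \<theta>) * cmod (\<psi> \<theta>) \<partial>circle_measure)"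
proof -
  have "2*pi * (1 - (cmod w)\<^sup>2) powr (- \<alpha>) = norm (\<integral>\<theta>. cnj (kw_pow \<alpha> w \<theta>) * \<psi> \<theta> \<partial>circle_measure)"
    by (simp only: integral_cnj_kw_pow_preimage[OF assms] norm_of_real) simp
  also have "\<dots> \<le> (\<integral>\<theta>. norm (cnj (kw_pow \<alpha> w \<theta>) * \<psi> \<theta>) \<partial>circle_measure)"
    by (rule integral_norm_bound)
  finally show ?thesis
    by (simp add: norm_mult)
qed

lemma Lq_norm_preimage_ge_one:
  assumes "cmod w < 1" and "in_Lq 1 \<psi>" and "riesz_proj_eq \<psi> (kw w)"
  shows "1 \<le> Lq_norm 1 \<psi>"
proof -
  have "integrable circle_measure \<psi>"
    using in_Lq_integrable[OF _ assms(2)] by simp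
  from integral_norm_kw_pow_preimage_ge[OF assms(1) this assms(3), of 0]
  have "2*pi \<le> (\<integral>\<theta>. cmod (\<psi> \<theta>) \<partial>circle_measure)"
    using assms(1) abs_square_less_1[of "cmod w"] by (simp add: kw_pow_0)
  then show ?thesis
    by (simp add: Lq_norm_def Lp_norm_def set_integral_eq_circle_integral one_ereal_def[symmetric])
qed

lemma Lq_norm_preimage_ge_infinity:
  assumes "cmod w < 1" and "in_Lq \<infinity> \<psi>" and "riesz_proj_eq \<psi> (kw w)"
  shows "(1 - (cmod w)\<^sup>2) powr (- 1) \<le> Lq_norm \<infinity> \<psi>"
proof -
  define x where "x = 1 - (cmod w)\<^sup>2"
  have "0 < x"
    using assms(1) by (simp add: x_def abs_square_less_1)
  define E where "E = real_of_ereal (esssup circle_measure (\<lambda>\<theta>. ereal (cmod (\<psi> \<theta>))))"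
  have "AE \<theta> in circle_measure. cmod (\<psi> \<theta>) \<le> E"
    unfolding E_def using assms(2)
    by (intro AE_le_real_esssup) (auto simp: in_Lq_def emeasure_circle_measure)
  have \<psi>: "integrable circle_measure \<psi>"
    using in_Lq_integrable[OF _ assms(2)] by simp
  have "2*pi * x powr (- 2) \<le> (\<integral>\<theta>. norm (kw_pow 2 w \<theta>) * cmod (\<psi> \<theta>) \<partial>circle_measure)"
    unfolding x_def by (rule integral_norm_kw_pow_preimage_ge[OF assms(1) \<psi> assms(3)])
  also have "\<dots> \<le> (\<integral>\<theta>. (norm (kw_pow 1 w \<theta>))\<^sup>2 * E \<partial>circle_measure)"
    using norm_kw_pow_2[of w] \<open>AE \<theta> in circle_measure. cmod (\<psi> \<theta>) \<le> E\<close>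
    by (intro integral_mono_AE integrable_norm_kw_pow_mult[OF assms(1) \<psi>])
       (auto intro!: continuous_on_imp_circle_integrable continuous_intros assms(1) mult_left_mono
             simp: power2_eq_square elim!: AE_mp)
  also have "\<dots> = 2*pi * (E / x)"
    using assms(1) by (simp add: integral_norm_kw_sq x_def)
  finally have "x * x powr (- 2) \<le> E"
    using \<open>0 < x\<close> by (simp add: field_simps)
  moreover have "x * x powr (- 2) = x powr (- 1)"
    using \<open>0 < x\<close> by (simp add: powr_mult_base)
  ultimately show ?thesis
    by (simp add: Lq_norm_def E_def x_def)
qed

text \<open>The exponent \<open>2/r\<close> is chosen so that \<open>\<bar>k_w\<^sup>2\<^sup>/\<^sup>r\<bar>\<^sup>r = \<bar>k_w\<bar>\<^sup>2\<close> has an explicit integral.\<close>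
lemma integral_norm_kw_pow_mult_le:
  assumes "1 < q" "1 < r" "1/q + 1/r = 1" and "cmod w < 1" and "in_Lq (ereal q) \<psi>"
  shows "(\<integral>\<theta>. norm (kw_pow (2/r) w \<theta>) * cmod (\<psi> \<theta>) \<partial>circle_measure)
           \<le> (\<integral>\<theta>. cmod (\<psi> \<theta>) powr q \<partial>circle_measure) powr (1/q) * (2*pi / (1 - (cmod w)\<^sup>2)) powr (1/r)"
proof -
  have \<psi>: "integrable circle_measure \<psi>"
    using in_Lq_integrable[OF _ assms(5)] assms(1) by simp
  have \<psi>_powr: "integrable circle_measure (\<lambda>\<theta>. cmod (\<psi> \<theta>) powr q)"
    using assms(5) by (simp add: in_Lq_def set_integrable_iff_circle_integrable)
  have kw_powr: "norm (kw_pow (2/r) w \<theta>) powr r = (norm (kw_pow 1 w \<theta>))\<^sup>2" for \<theta>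
    using assms(2) by (simp add: norm_kw_pow_powr norm_kw_pow_2)
  have kw_sq: "integrable circle_measure (\<lambda>\<theta>. (norm (kw_pow 1 w \<theta>))\<^sup>2)"
    by (intro continuous_on_imp_circle_integrable continuous_intros assms(4))
  have "(\<integral>\<theta>. norm (kw_pow (2/r) w \<theta>) * cmod (\<psi> \<theta>) \<partial>circle_measure)
          \<le> (\<integral>\<theta>. cmod (\<psi> \<theta>) powr q \<partial>circle_measure) powr (1/q)
             * (\<integral>\<theta>. norm (kw_pow (2/r) w \<theta>) powr r \<partial>circle_measure) powr (1/r)"
    using Holder_inequality[OF assms(1-3), of "\<lambda>\<theta>. cmod (\<psi> \<theta>)" circle_measure
        "\<lambda>\<theta>. norm (kw_pow (2/r) w \<theta>)"]
      integrable_norm_kw_pow_mult[OF assms(4) \<psi>, of "2/r"] \<psi> \<psi>_powr kw_sq assms(4)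
    by (auto simp: kw_powr mult.commute continuous_on_imp_circle_measurable continuous_intros)
  also have "(\<integral>\<theta>. norm (kw_pow (2/r) w \<theta>) powr r \<partial>circle_measure) = 2*pi / (1 - (cmod w)\<^sup>2)"
    using assms(4) by (simp add: kw_powr integral_norm_kw_sq)
  finally show ?thesis .
qed

lemma Lq_norm_preimage_ge_real:
  assumes "1 < q" and "cmod w < 1" and "in_Lq (ereal q) \<psi>" and "riesz_proj_eq \<psi> (kw w)"
  shows "(1 - (cmod w)\<^sup>2) powr (- (1 - 1/q)) \<le> Lq_norm (ereal q) \<psi>"
proof -
  define x where "x = 1 - (cmod w)\<^sup>2"
  define r where "r = q / (q - 1)"
  define A where "A = (\<integral>\<theta>. cmod (\<psi> \<theta>) powr q \<partial>circle_measure)"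
  have "0 < x"
    using assms(2) by (simp add: x_def abs_square_less_1)
  have r: "1 < r" "1/q + 1/r = 1" "1/r = 1 - 1/q"
    using assms(1) by (auto simp: r_def field_simps)
  have "integrable circle_measure \<psi>"
    using in_Lq_integrable[OF _ assms(3)] assms(1) by simp
  then have "2*pi * x powr (- (2/r)) \<le> (\<integral>\<theta>. norm (kw_pow (2/r) w \<theta>) * cmod (\<psi> \<theta>) \<partial>circle_measure)"
    unfolding x_def by (rule integral_norm_kw_pow_preimage_ge[OF assms(2) _ assms(4)])
  also have "\<dots> \<le> A powr (1/q) * (2*pi / x) powr (1/r)"
    unfolding A_def x_def by (rule integral_norm_kw_pow_mult_le[OF assms(1) r(1,2) assms(2,3)])
  finally have "2*pi * x powr (- (2/r)) \<le> A powr (1/q) * (2*pi / x) powr (1/r)" .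
  moreover have "2*pi * x powr (- (2/r)) = ((2*pi) powr (1/q) * x powr (- (1/r))) * (2*pi / x) powr (1/r)"
  proof -
    have "2*pi = (2*pi) powr (1/q) * (2*pi) powr (1/r)"
      by (simp add: powr_add[symmetric] r(2))
    moreover have "x powr (- (2/r)) = x powr (- (1/r)) * x powr (- (1/r))"
      by (simp add: powr_add[symmetric])
    moreover have "(2*pi / x) powr (1/r) = (2*pi) powr (1/r) * x powr (- (1/r))"
      using \<open>0 < x\<close> by (simp add: powr_divide powr_minus_divide)
    ultimately show ?thesis
      by (metis mult.assoc mult.commute)
  qed
  ultimately have "(2*pi) powr (1/q) * x powr (- (1/r)) \<le> A powr (1/q)"
    using \<open>0 < x\<close> by (simp add: mult_le_cancel_right_pos)
  then have "x powr (- (1/r)) \<le> (A / (2*pi)) powr (1/q)"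
    by (simp add: powr_divide field_simps)
  then show ?thesis
    using assms(1) r(3)
    by (simp add: Lq_norm_def Lp_norm_def set_integral_eq_circle_integral A_def x_def)
qed

lemma four_over_conj_real: "four_over_conj (ereal q) / 4 = 1 - 1/q"
  by (simp add: four_over_conj_def)

lemma four_over_conj_nonneg: "1 \<le> q \<Longrightarrow> 0 \<le> four_over_conj q"
  by (cases q) (auto simp: four_over_conj_def field_simps)

lemma Lq_norm_preimage_ge:
  assumes "1 \<le> q" and "cmod w < 1" and "in_Lq q \<psi>" and "riesz_proj_eq \<psi> (kw w)"
  shows "(1 - (cmod w)\<^sup>2) powr (- (four_over_conj q / 4)) \<le> Lq_norm q \<psi>"
proof (cases q)
  case (real q')
  show ?thesis
  proof (cases "q' = 1")
    case True
    then show ?thesis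
      using Lq_norm_preimage_ge_one[OF assms(2) _ assms(4)] assms(2,3) real abs_square_less_1[of "cmod w"]
      by (simp add: four_over_conj_def one_ereal_def)
  next
    case False
    then have "1 < q'"
      using assms(1) real by simp
    with Lq_norm_preimage_ge_real[OF this assms(2) _ assms(4)] assms(3) real show ?thesis
      by (simp add: four_over_conj_real)
  qed
next
  case PInf
  with Lq_norm_preimage_ge_infinity[OF assms(2) _ assms(4)] assms(3) show ?thesis
    by (simp add: four_over_conj_def)
qed (use assms(1) in simp)

section \<open>The minimal preimage\<close>

text \<open>For \<open>\<beta> = 2/q - 1\<close> this is the minimal preimage: \<open>\<bar>\<psi>\<bar>\<^sup>q\<close> is a multiple of \<open>\<bar>k_w\<bar>\<^sup>2\<close>,
  which is the equality case of the Hoelder step in \<open>integral_norm_kw_pow_mult_le\<close>.\<close>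
definition extremal_preimage :: "real \<Rightarrow> complex \<Rightarrow> real \<Rightarrow> complex" where
  "extremal_preimage \<beta> w \<theta> = of_real ((1 - (cmod w)\<^sup>2) powr \<beta>) * kw w \<theta> * cnj (kw_pow \<beta> w \<theta>)"

definition extremal_exponent :: "ereal \<Rightarrow> real" where
  "extremal_exponent q = (if q = \<infinity> then -1 else 2 / real_of_ereal q - 1)"

lemma continuous_on_extremal_preimage:
  "cmod w < 1 \<Longrightarrow> continuous_on A (extremal_preimage \<beta> w)"
  unfolding extremal_preimage_def by (intro continuous_intros)

lemma riesz_proj_eq_extremal_preimage:
  assumes "cmod w < 1"
  shows "riesz_proj_eq (extremal_preimage \<beta> w) (kw w)"
  unfolding riesz_proj_eq_def
proof (intro conjI allI impI)
  fix n :: int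
  assume "0 \<le> n"
  define x where "x = 1 - (cmod w)\<^sup>2"
  have "0 < x"
    using assms by (simp add: x_def abs_square_less_1)
  define \<phi> where "\<phi> \<theta> = fourier_basis (-n) \<theta> * kw w \<theta>" for \<theta>
  have "integrable circle_measure \<phi>"
    unfolding \<phi>_def by (intro continuous_on_imp_circle_integrable continuous_intros assms)
  moreover have "fourier_coeff \<phi> (int m) = cnj w ^ nat n * cnj w ^ m" for m
    unfolding \<phi>_def fourier_coeff_mult_fourier_basis fourier_coeff_kw[OF assms] using \<open>0 \<le> n\<close>
    by (simp add: power_add[symmetric] nat_add_distrib add.commute)
  ultimately have reproducing: "(\<integral>\<theta>. cnj (kw_pow \<beta> w \<theta>) * \<phi> \<theta> \<partial>circle_measure) / (2*pi)
      = cnj w ^ nat n * of_real (x powr (- \<beta>))"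
    unfolding x_def by (rule integral_cnj_kw_pow_mult[OF assms])
  have "fourier_coeff (extremal_preimage \<beta> w) n
      = (\<integral>\<theta>. of_real (x powr \<beta>) * (cnj (kw_pow \<beta> w \<theta>) * \<phi> \<theta>) \<partial>circle_measure) / (2*pi)"
    unfolding fourier_coeff_eq_integral extremal_preimage_def \<phi>_def x_def by (simp add: mult_ac)
  also have "\<dots> = of_real (x powr \<beta>) * ((\<integral>\<theta>. cnj (kw_pow \<beta> w \<theta>) * \<phi> \<theta> \<partial>circle_measure) / (2*pi))"
    by simp
  also have "\<dots> = cnj w ^ nat n * of_real (x powr \<beta> * x powr (- \<beta>))"
    unfolding reproducing by simp
  also have "x powr \<beta> * x powr (- \<beta>) = 1"
    using \<open>0 < x\<close> by (simp add: powr_add[symmetric])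
  finally show "fourier_coeff (extremal_preimage \<beta> w) n = fourier_coeff (kw w) n"
    using \<open>0 \<le> n\<close> by (simp add: fourier_coeff_kw[OF assms])
next
  fix n :: int
  assume "n < 0"
  then show "fourier_coeff (kw w) n = 0"
    by (simp add: fourier_coeff_kw[OF assms])
qed

lemma norm_extremal_preimage:
  assumes "cmod w < 1"
  shows "cmod (extremal_preimage \<beta> w \<theta>) = (1 - (cmod w)\<^sup>2) powr \<beta> * norm (kw_denom w \<theta>) powr (- 1 + - \<beta>)"
proof -
  have "cmod (extremal_preimage \<beta> w \<theta>)
          = (1 - (cmod w)\<^sup>2) powr \<beta> * (1 / norm (kw_denom w \<theta>)) * norm (kw_denom w \<theta>) powr (- \<beta>)"
    by (simp add: extremal_preimage_def norm_mult norm_kw norm_kw_pow)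
  also have "1 / norm (kw_denom w \<theta>) = norm (kw_denom w \<theta>) powr (- 1)"
    using kw_denom_nonzero[OF assms, of \<theta>] by (simp add: powr_minus_divide)
  finally show ?thesis
    by (simp only: powr_add mult.assoc)
qed

lemma norm_extremal_preimage_powr:
  assumes "cmod w < 1" and "0 < q"
  shows "cmod (extremal_preimage (2/q - 1) w \<theta>) powr q
           = (1 - (cmod w)\<^sup>2) powr (2 - q) * (norm (kw_pow 1 w \<theta>))\<^sup>2"
proof -
  have "cmod (extremal_preimage (2/q - 1) w \<theta>) powr q
          = (1 - (cmod w)\<^sup>2) powr ((2/q - 1) * q) * norm (kw_denom w \<theta>) powr ((- 1 + - (2/q - 1)) * q)"
    using assms(1) abs_square_less_1[of "cmod w"]
    by (simp add: norm_extremal_preimage powr_mult powr_powr)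
  also have "(2/q - 1) * q = 2 - q"
    using assms(2) by (simp add: field_simps)
  also have "(- 1 + - (2/q - 1)) * q = - 1 + - 1"
    using assms(2) by (simp add: field_simps)
  finally show ?thesis
    by (simp only: powr_add norm_kw_pow power2_eq_square)
qed

lemma extremal_preimage_real:
  assumes "1 \<le> q" and "cmod w < 1"
  shows "in_Lq (ereal q) (extremal_preimage (2/q - 1) w)"
    and "Lq_norm (ereal q) (extremal_preimage (2/q - 1) w) = (1 - (cmod w)\<^sup>2) powr (- (1 - 1/q))"
proof -
  define x where "x = 1 - (cmod w)\<^sup>2"
  have "0 < x"
    using assms(2) by (simp add: x_def abs_square_less_1)
  have powr_eq: "(\<lambda>\<theta>. cmod (extremal_preimage (2/q - 1) w \<theta>) powr q)
                   = (\<lambda>\<theta>. x powr (2 - q) * (norm (kw_pow 1 w \<theta>))\<^sup>2)"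
    using assms by (simp add: norm_extremal_preimage_powr x_def)
  have "integrable circle_measure (\<lambda>\<theta>. x powr (2 - q) * (norm (kw_pow 1 w \<theta>))\<^sup>2)"
    by (intro continuous_on_imp_circle_integrable continuous_intros assms(2))
  then show "in_Lq (ereal q) (extremal_preimage (2/q - 1) w)"
    using assms(2)
    by (simp add: in_Lq_def set_integrable_iff_circle_integrable powr_eq
        continuous_on_imp_circle_measurable continuous_on_extremal_preimage)
  have "Lq_norm (ereal q) (extremal_preimage (2/q - 1) w) = (x powr (2 - q) / x) powr (1/q)"
    using assms \<open>0 < x\<close>
    by (simp add: Lq_norm_def Lp_norm_def set_integral_eq_circle_integral powr_eq integral_norm_kw_sq x_def)
  also have "x powr (2 - q) / x = x powr (2 - q + - 1)"
    using \<open>0 < x\<close> by (simp only: powr_add powr_minus_divide powr_one) simp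
  also have "\<dots> powr (1/q) = x powr ((1 - q) * (1/q))"
    by (simp add: powr_powr)
  also have "(1 - q) * (1/q) = - (1 - 1/q)"
    using assms(1) by (simp add: field_simps)
  finally show "Lq_norm (ereal q) (extremal_preimage (2/q - 1) w) = (1 - (cmod w)\<^sup>2) powr (- (1 - 1/q))"
    by (simp add: x_def)
qed

lemma extremal_preimage_infinity:
  assumes "cmod w < 1"
  shows "in_Lq \<infinity> (extremal_preimage (-1) w)"
    and "Lq_norm \<infinity> (extremal_preimage (-1) w) \<le> (1 - (cmod w)\<^sup>2) powr (- 1)"
proof -
  have measurable: "extremal_preimage (-1) w \<in> borel_measurable circle_measure"
    by (intro continuous_on_imp_circle_measurable continuous_on_extremal_preimage assms)
  have "cmod (extremal_preimage (-1) w \<theta>) = (1 - (cmod w)\<^sup>2) powr (- 1)" for \<theta>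
    using kw_denom_nonzero[OF assms, of \<theta>] by (simp add: norm_extremal_preimage[OF assms])
  then have le: "esssup circle_measure (\<lambda>\<theta>. ereal (cmod (extremal_preimage (-1) w \<theta>)))
                   \<le> ereal ((1 - (cmod w)\<^sup>2) powr (- 1))"
    using measurable by (intro esssup_I) auto
  then show "in_Lq \<infinity> (extremal_preimage (-1) w)"
    using measurable by (auto simp: in_Lq_def intro: le_less_trans)
  show "Lq_norm \<infinity> (extremal_preimage (-1) w) \<le> (1 - (cmod w)\<^sup>2) powr (- 1)"
    unfolding Lq_norm_def using le
    by (cases "esssup circle_measure (\<lambda>\<theta>. ereal (cmod (extremal_preimage (-1) w \<theta>)))") auto
qed

lemma extremal_preimage_bounds:
  assumes "1 \<le> q" and "cmod w < 1"
  shows "in_Lq q (extremal_preimage (extremal_exponent q) w)"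
    and "Lq_norm q (extremal_preimage (extremal_exponent q) w) \<le> (1 - (cmod w)\<^sup>2) powr (- (four_over_conj q / 4))"
proof -
  have "in_Lq q (extremal_preimage (extremal_exponent q) w) \<and>
        Lq_norm q (extremal_preimage (extremal_exponent q) w) \<le> (1 - (cmod w)\<^sup>2) powr (- (four_over_conj q / 4))"
  proof (cases q)
    case (real q')
    with extremal_preimage_real[of q' w] assms show ?thesis
      by (simp add: extremal_exponent_def four_over_conj_real)
  next
    case PInf
    with extremal_preimage_infinity[OF assms(2)] show ?thesis
      by (simp add: extremal_exponent_def four_over_conj_def)
  qed (use assms(1) in simp)
  then show "in_Lq q (extremal_preimage (extremal_exponent q) w)"
    and "Lq_norm q (extremal_preimage (extremal_exponent q) w) \<le> (1 - (cmod w)\<^sup>2) powr (- (four_over_conj q / 4))"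
    by auto
qed

lemma Lq_norm_minimal_preimage:
  assumes "1 \<le> q" and "cmod w < 1" and "minimal_preimage q w \<psi>"
  shows "Lq_norm q \<psi> = (1 - (cmod w)\<^sup>2) powr (- (four_over_conj q / 4))"
proof (rule antisym)
  have "Lq_norm q \<psi> \<le> Lq_norm q (extremal_preimage (extremal_exponent q) w)"
    using assms(3) extremal_preimage_bounds(1)[OF assms(1,2)] riesz_proj_eq_extremal_preimage[OF assms(2)]
    by (simp add: minimal_preimage_def)
  with extremal_preimage_bounds(2)[OF assms(1,2)]
  show "Lq_norm q \<psi> \<le> (1 - (cmod w)\<^sup>2) powr (- (four_over_conj q / 4))"
    by linarith
  show "(1 - (cmod w)\<^sup>2) powr (- (four_over_conj q / 4)) \<le> Lq_norm q \<psi>"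
    using assms(3) Lq_norm_preimage_ge[OF assms(1,2)] by (simp add: minimal_preimage_def)
qed

section \<open>The sharp range of exponents\<close>

lemma ex_one_minus_powr_less_linear:
  fixes c k :: real
  assumes "c < k"
  shows "\<exists>y. 0 < y \<and> y < 1 \<and> (1 - y) powr (- c) < 1 + k * y"
proof -
  define f where "f y = (1 - y) powr (- c)" for y :: real
  have "DERIV f 0 :> c"
    unfolding f_def using DERIV_powr[of "\<lambda>y. 1 - y" "-1" 0 "\<lambda>_. - c" 0]
    by (auto intro!: derivative_eq_intros)
  then have "((\<lambda>h. (f h - f 0) / h) \<longlongrightarrow> c) (at 0)"
    by (simp add: DERIV_def)
  then have "eventually (\<lambda>h. (f h - f 0) / h < k) (at_right 0)"
    using order_tendstoD(2)[OF _ assms] filterlim_at_split by blast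
  then obtain b where "0 < b" and b: "\<And>h. 0 < h \<Longrightarrow> h < b \<Longrightarrow> (f h - f 0) / h < k"
    unfolding eventually_at_right_field by auto
  define y where "y = min (b/2) (1/2)"
  have "0 < y" "y < 1" "y < b"
    using \<open>0 < b\<close> by (auto simp: y_def)
  with b[of y] show ?thesis
    by (auto simp: f_def divide_less_eq)
qed

lemma le_four_over_conj_if_Lp_norm_kw_le_preimages:
  assumes "1 \<le> q" and "0 \<le> p"
    and bound: "\<And>w \<psi>. cmod w < 1 \<Longrightarrow> in_Lq q \<psi> \<Longrightarrow> riesz_proj_eq \<psi> (kw w) \<Longrightarrow>
                  Lp_norm p (kw w) \<le> Lq_norm q \<psi>"
  shows "p \<le> four_over_conj q"
proof (rule ccontr)
  define s where "s = four_over_conj q"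
  assume "\<not> p \<le> four_over_conj q"
  then have "s < p" "0 < p"
    using four_over_conj_nonneg[OF assms(1)] by (auto simp: s_def)
  then have "p * s / 4 < (p/2)\<^sup>2"
    by (simp add: power2_eq_square)
  then obtain y where y: "0 < y" "y < 1" "(1 - y) powr (- (p * s / 4)) < 1 + (p/2)\<^sup>2 * y"
    using ex_one_minus_powr_less_linear by blast
  define w where "w = complex_of_real (sqrt y)"
  have w: "cmod w < 1" "(cmod w)\<^sup>2 = y"
    using y by (auto simp: w_def real_sqrt_lt_1_iff)
  define \<psi> where "\<psi> = extremal_preimage (extremal_exponent q) w"
  have "(1 + (p/2)\<^sup>2 * y) powr (1/p) \<le> Lp_norm p (kw w)"
    using Lp_norm_kw_ge[OF w(1) \<open>0 < p\<close>] w(2) by simp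
  also have "\<dots> \<le> Lq_norm q \<psi>"
    unfolding \<psi>_def
    by (intro bound w(1) extremal_preimage_bounds(1)[OF assms(1) w(1)] riesz_proj_eq_extremal_preimage)
  also have "\<dots> \<le> (1 - y) powr (- (s / 4))"
    using extremal_preimage_bounds(2)[OF assms(1) w(1)] w(2) by (simp add: \<psi>_def s_def)
  finally have "((1 + (p/2)\<^sup>2 * y) powr (1/p)) powr p \<le> ((1 - y) powr (- (s / 4))) powr p"
    using \<open>0 < p\<close> by (intro powr_mono2) auto
  then have "1 + (p/2)\<^sup>2 * y \<le> (1 - y) powr (- (p * s / 4))"
    using \<open>0 < p\<close> y by (simp add: powr_powr mult.commute)
  with y(3) show False
    by linarith
qed

lemma Lp_norm_kw_le_preimages_iff:
  assumes "1 \<le> q" and "0 \<le> p"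
  shows "(\<forall>w. cmod w < 1 \<longrightarrow> (\<forall>\<psi>. in_Lq q \<psi> \<and> riesz_proj_eq \<psi> (kw w) \<longrightarrow>
            Lp_norm p (kw w) \<le> Lq_norm q \<psi>))
         \<longleftrightarrow> p \<le> four_over_conj q"
proof
  assume "\<forall>w. cmod w < 1 \<longrightarrow> (\<forall>\<psi>. in_Lq q \<psi> \<and> riesz_proj_eq \<psi> (kw w) \<longrightarrow>
            Lp_norm p (kw w) \<le> Lq_norm q \<psi>)"
  then show "p \<le> four_over_conj q"
    using le_four_over_conj_if_Lp_norm_kw_le_preimages[OF assms] by blast
next
  assume "p \<le> four_over_conj q"
  show "\<forall>w. cmod w < 1 \<longrightarrow> (\<forall>\<psi>. in_Lq q \<psi> \<and> riesz_proj_eq \<psi> (kw w) \<longrightarrow>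
            Lp_norm p (kw w) \<le> Lq_norm q \<psi>)"
  proof (intro allI impI, elim conjE)
    fix w \<psi>
    assume "cmod w < 1" "in_Lq q \<psi>" "riesz_proj_eq \<psi> (kw w)"
    have "Lp_norm p (kw w) \<le> (1 - (cmod w)\<^sup>2) powr (- (p/4))"
      by (rule Lp_norm_kw_le[OF \<open>cmod w < 1\<close> assms(2)])
    also have "\<dots> \<le> (1 - (cmod w)\<^sup>2) powr (- (four_over_conj q / 4))"
      using \<open>p \<le> four_over_conj q\<close> \<open>cmod w < 1\<close> abs_square_less_1[of "cmod w"]
      by (intro powr_mono') auto
    also have "\<dots> \<le> Lq_norm q \<psi>"
      by (rule Lq_norm_preimage_ge[OF assms(1) \<open>cmod w < 1\<close> \<open>in_Lq q \<psi>\<close> \<open>riesz_proj_eq \<psi> (kw w)\<close>])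
    finally show "Lp_norm p (kw w) \<le> Lq_norm q \<psi>" .
  qed
qed

lemma Lq_norm_minimal_preimage_eq_Lp_norm_kw:
  assumes "q = 1 \<or> q = 2" and "cmod w < 1" and "minimal_preimage q w \<psi>"
  shows "Lq_norm q \<psi> = Lp_norm (four_over_conj q) (kw w)"
proof -
  have "1 \<le> q"
    using assms(1) by auto
  from Lq_norm_minimal_preimage[OF this assms(2,3)] assms(1,2) show ?thesis
    using abs_square_less_1[of "cmod w"]
    by (auto simp: four_over_conj_def Lp_norm_0_kw Lp_norm_2_kw)
qed

lemma Lq_norm_minimal_preimage_eq_Lp_norm_kw_iff:
  assumes "1 \<le> q" "q \<noteq> 1" "q \<noteq> 2" and "cmod w < 1" and "minimal_preimage q w \<psi>"
  shows "Lq_norm q \<psi> = Lp_norm (four_over_conj q) (kw w) \<longleftrightarrow> w = 0"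
proof -
  define s where "s = four_over_conj q"
  have "0 < s \<and> s \<noteq> 2"
  proof (cases q)
    case (real r)
    then have "1 < r" "r \<noteq> 2"
      using assms(1-3) by (auto simp: one_ereal_def)
    with real show ?thesis
      by (simp add: s_def four_over_conj_def field_simps)
  qed (use assms(1) in \<open>auto simp: s_def four_over_conj_def\<close>)
  then have "0 < s" "s \<noteq> 2"
    by auto
  have Lq: "Lq_norm q \<psi> = (1 - (cmod w)\<^sup>2) powr (- (s / 4))"
    unfolding s_def by (rule Lq_norm_minimal_preimage[OF assms(1,4,5)])
  show ?thesis
  proof
    assume "Lq_norm q \<psi> = Lp_norm (four_over_conj q) (kw w)"
    then show "w = 0"
      using Lp_norm_kw_less[OF assms(4) _ \<open>0 < s\<close> \<open>s \<noteq> 2\<close>] by (auto simp: Lq s_def)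
  next
    assume "w = 0"
    then show "Lq_norm q \<psi> = Lp_norm (four_over_conj q) (kw w)"
      using Lp_norm_kw_le[of 0 s] Lp_norm_kw_ge[of 0 s] \<open>0 < s\<close>
      by (simp add: Lq s_def)
  qed
qed

theorem theorem8:
  fixes q :: ereal
  assumes "1 \<le> q"
  shows "(\<forall>p::real. p \<ge> 0 \<longrightarrow>
            ((\<forall>w. cmod w < 1 \<longrightarrow> (\<forall>\<psi>. in_Lq q \<psi> \<and> riesz_proj_eq \<psi> (kw w) \<longrightarrow>
                  Lp_norm p (kw w) \<le> Lq_norm q \<psi>))
             \<longleftrightarrow> p \<le> four_over_conj q))
      \<and> ((q = 1 \<or> q = 2) \<longrightarrow>
            (\<forall>w \<psi>. cmod w < 1 \<and> minimal_preimage q w \<psi> \<longrightarrow>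
               Lq_norm q \<psi> = Lp_norm (four_over_conj q) (kw w)))
      \<and> (\<not> (q = 1 \<or> q = 2) \<longrightarrow>
            (\<forall>w \<psi>. cmod w < 1 \<and> minimal_preimage q w \<psi> \<longrightarrow>
               (Lq_norm q \<psi> = Lp_norm (four_over_conj q) (kw w) \<longleftrightarrow> w = 0)))"
  using Lp_norm_kw_le_preimages_iff[OF assms] Lq_norm_minimal_preimage_eq_Lp_norm_kw
    Lq_norm_minimal_preimage_eq_Lp_norm_kw_iff[OF assms]
  by blast

end
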